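(* Let $r\ge2$ be an integer, $m,\ell$ positive integers with $r<2^m$, let $\alpha_0\neq0$ be a real number with $\alpha_0\in(-r/2,r/2]$, and let $B$ be an integer with $1\le B<B_{\max}=(2^{m+\ell}/r-1)/2$. Then $$\sum_{t=-B}^{B}P(\alpha_0+rt)=\frac1r(1-\epsilon_R)+\epsilon_A$$ where $$0\le\epsilon_R\le\frac{1}{\pi^2}\left(\frac{2}{B}+\frac{1}{B^2}+\frac{1}{3B^3}\right)\quad\text{and}\quad|\epsilon_A|\le(2B+1)\tilde\epsilon,\qquad \tilde\epsilon=\frac{\pi^2}{2^{m+\ell}}\left(\frac34+\frac{r}{2^{m+\ell}}\cdot\frac1{12}\right).$$
   Context: Let $\beta=2^{m+\ell}\bmod r$ and $L=\lfloor 2^{m+\ell}/r\rfloor$. For real $\alpha$ not a multiple of $2^{m+\ell}$, $$P(\alpha)=\frac{\beta}{2^{2(m+\ell)}}\cdot\frac{1-\cos(2\pi\alpha(L+1)/2^{m+\ell})}{1-\cos(2\pi\alpha/2^{m+\ell})}+\frac{r-\beta}{2^{2(m+\ell)}}\cdot\frac{1-\cos(2\pi\alpha L/2^{m+\ell})}{1-\cos(2\pi\alpha/2^{m+\ell})}.$$ *)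

theory Defs
  imports Complex_Main
begin

definition qpe_beta :: "nat \<Rightarrow> nat \<Rightarrow> nat \<Rightarrow> nat" where
  "qpe_beta r m l = 2 ^ (m + l) mod r"

definition qpe_L :: "nat \<Rightarrow> nat \<Rightarrow> nat \<Rightarrow> nat" where
  "qpe_L r m l = 2 ^ (m + l) div r"

definition qpe_P :: "nat \<Rightarrow> nat \<Rightarrow> nat \<Rightarrow> real \<Rightarrow> real" where
  "qpe_P r m l \<alpha> =
     (let N = (2::real) ^ (m + l); \<beta> = real (qpe_beta r m l); L = real (qpe_L r m l) in
      \<beta> / N\<^sup>2 * ((1 - cos (2 * pi * \<alpha> * (L + 1) / N)) / (1 - cos (2 * pi * \<alpha> / N)))
      + (real r - \<beta>) / N\<^sup>2 * ((1 - cos (2 * pi * \<alpha> * L / N)) / (1 - cos (2 * pi * \<alpha> / N))))"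

end

theory Submission
  imports Defs "HOL-Analysis.Analysis" "HOL-Real_Asymp.Real_Asymp"
begin

(*
  Put N = 2^(m+l), \<theta> = \<pi>\<alpha>/N and x = \<alpha>0/r. Since 1 - cos 2z = 2 sin\<^sup>2 z,
    P(\<alpha>) = (\<beta> sin\<^sup>2((L+1)\<theta>) + (r-\<beta>) sin\<^sup>2(L\<theta>)) / (N\<^sup>2 sin\<^sup>2 \<theta>).
  For \<alpha> = \<alpha>0 + rt the identity rL + \<beta> = N shows that L\<theta> and (L+1)\<theta> differ from \<pi>x + t\<pi>
  by O(|\<alpha>|/N), while N sin \<theta> = \<pi>\<alpha> (1 + O(\<theta>\<^sup>2)) because |\<theta>| \<le> \<pi>/2. Hence every summand lies
  within 11/(2N) of sin\<^sup>2(\<pi>x) / (\<pi>\<^sup>2 r (x+t)\<^sup>2), and 11/2 \<le> 3\<pi>\<^sup>2/4 gives the bound on \<epsilon>A.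
  By the reflection formula \<psi>'(x) + \<psi>'(1-x) = \<pi>\<^sup>2/sin\<^sup>2(\<pi>x) these main terms add up to
  (1 - \<epsilon>R)/r with \<epsilon>R = sin\<^sup>2(\<pi>x)/\<pi>\<^sup>2 (\<psi>'(x+B+1) + \<psi>'(1-x+B)), and 0 < \<psi>'(z) \<le> 1/(z - 1/2),
  obtained by comparison with a telescoping series, gives 0 \<le> \<epsilon>R \<le> 2/(\<pi>\<^sup>2 B).
*)

lemma has_field_derivative_unique_on_open:
  fixes f g :: "real \<Rightarrow> real"
  assumes "open S" "x \<in> S" "\<And>y. y \<in> S \<Longrightarrow> f y = g y"
    and "(f has_field_derivative f') (at x)" "(g has_field_derivative g') (at x)"
  shows "f' = g'"
proof -
  have "(g has_field_derivative f') (at x)"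
    using has_field_derivative_transform_within_open[OF assms(4,1,2)] assms(3) by blast
  then show ?thesis
    using assms(5) DERIV_unique by blast
qed

lemma not_Ints_reflect:
  fixes y :: real
  assumes "y \<notin> \<int>"
  shows "1 - y \<notin> \<int>" "y \<notin> \<int>\<^sub>\<le>\<^sub>0" "1 - y \<notin> \<int>\<^sub>\<le>\<^sub>0" "sin (pi * y) \<noteq> 0"
proof -
  show "1 - y \<notin> \<int>"
    using assms Ints_diff[OF Ints_1, of "1 - y"] by auto
  then show "y \<notin> \<int>\<^sub>\<le>\<^sub>0" "1 - y \<notin> \<int>\<^sub>\<le>\<^sub>0"
    using assms nonpos_Ints_subset_Ints by blast+
  show "sin (pi * y) \<noteq> 0"
    using assms sin_times_pi_eq_0[of y] by (simp add: mult.commute)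
qed

lemma Gamma_reflection_real:
  fixes x :: real
  assumes "x \<notin> \<int>"
  shows "Gamma x * Gamma (1 - x) = pi / sin (pi * x)"
proof -
  have "complex_of_real (Gamma x * Gamma (1 - x)) = Gamma (of_real x) * Gamma (of_real (1 - x))"
    by (simp only: of_real_mult Gamma_complex_of_real)
  also have "\<dots> = Gamma (of_real x) * Gamma (1 - of_real x)"
    by (simp only: of_real_diff of_real_1)
  also have "\<dots> = of_real pi / sin (of_real pi * of_real x)"
    by (rule Gamma_reflection_complex)
  also have "\<dots> = complex_of_real (pi / sin (pi * x))"
    by (simp only: of_real_mult[symmetric] sin_of_real of_real_divide)
  finally show ?thesis
    by (simp only: of_real_eq_iff)
qed

lemma Digamma_reflection_real:
  fixes y :: real
  assumes "y \<notin> \<int>"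
  shows "Digamma y - Digamma (1 - y) = - pi * cos (pi * y) / sin (pi * y)"
proof -
  note y = not_Ints_reflect[OF assms]
  have "Gamma y * Gamma (1 - y) * (Digamma y - Digamma (1 - y))
        = - pi * (pi * cos (pi * y)) / sin (pi * y) ^ 2"
  proof (rule has_field_derivative_unique_on_open[of "- \<int>" y
        "\<lambda>x. Gamma x * Gamma (1 - x)" "\<lambda>x. pi / sin (pi * x)"])
    show "((\<lambda>x. Gamma x * Gamma (1 - x)) has_field_derivative
          Gamma y * Gamma (1 - y) * (Digamma y - Digamma (1 - y))) (at y)"
      using y by (auto intro!: derivative_eq_intros simp: algebra_simps)
    show "((\<lambda>x. pi / sin (pi * x)) has_field_derivative
          - pi * (pi * cos (pi * y)) / sin (pi * y) ^ 2) (at y)"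
      using y by (auto intro!: derivative_eq_intros simp: power2_eq_square)
  qed (use assms Gamma_reflection_real in auto)
  then have "pi / sin (pi * y) * (Digamma y - Digamma (1 - y))
        = pi / sin (pi * y) * (- pi * cos (pi * y) / sin (pi * y))"
    using Gamma_reflection_real[OF assms] by (simp add: power2_eq_square)
  then show ?thesis
    using y by (subst (asm) mult_left_cancel) auto
qed

lemma Polygamma_1_reflection_real:
  fixes y :: real
  assumes "y \<notin> \<int>"
  shows "Polygamma 1 y + Polygamma 1 (1 - y) = pi\<^sup>2 / sin (pi * y) ^ 2"
proof (rule has_field_derivative_unique_on_open[of "- \<int>" y
      "\<lambda>x. Digamma x - Digamma (1 - x)" "\<lambda>x. - pi * cos (pi * x) / sin (pi * x)"])
  note y = not_Ints_reflect[OF assms]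
  show "((\<lambda>x. Digamma x - Digamma (1 - x)) has_field_derivative
        Polygamma 1 y + Polygamma 1 (1 - y)) (at y)"
    using y by (auto intro!: derivative_eq_intros)
  show "((\<lambda>x. - pi * cos (pi * x) / sin (pi * x)) has_field_derivative
        pi\<^sup>2 / sin (pi * y) ^ 2) (at y)"
    using y by (auto intro!: derivative_eq_intros simp: field_simps)
      (use sin_cos_squared_add[of "pi * y"] in algebra)
qed (use assms Digamma_reflection_real in auto)

lemma Polygamma_1_sums_real:
  fixes y :: real
  assumes "0 < y"
  shows "(\<lambda>k. 1 / (y + real k)\<^sup>2) sums Polygamma 1 y"
  using Polygamma_LIMSEQ[of y 1] assms by (simp add: inverse_eq_divide power2_eq_square)

lemma Polygamma_1_le_real:
  fixes z :: real
  assumes "1/2 < z"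
  shows "Polygamma 1 z \<le> 1 / (z - 1/2)"
proof -
  define h where "h k = 1 / (z - 1/2 + real k)" for k
  have "h \<longlonglongrightarrow> 0"
    unfolding h_def by real_asymp
  then have tele: "(\<lambda>k. h k - h (Suc k)) sums (1 / (z - 1/2))"
    using telescope_sums'[of h 0] by (simp add: h_def)
  have "1 / (z + real k)\<^sup>2 \<le> h k - h (Suc k)" for k
  proof -
    have pos: "0 < (z + real k - 1/2) * (z + real k + 1/2)"
      using assms by (intro mult_pos_pos) auto
    have "(z + real k - 1/2) * (z + real k + 1/2) \<le> (z + real k)\<^sup>2"
      by (simp add: power2_eq_square algebra_simps)
    then have "1 / (z + real k)\<^sup>2 \<le> 1 / ((z + real k - 1/2) * (z + real k + 1/2))"
      using pos assms by (intro divide_left_mono mult_pos_pos) auto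
    also have "\<dots> = h k - h (Suc k)"
      using assms by (simp add: h_def field_simps)
    finally show ?thesis .
  qed
  then show ?thesis
    using sums_le[OF _ Polygamma_1_sums_real tele] assms by auto
qed

lemma sum_inverse_square_shifts_split:
  fixes x :: real
  shows "(\<Sum>t = -int n..int n. 1 / (x + of_int t)\<^sup>2)
       = (\<Sum>k<Suc n. 1 / (x + real k)\<^sup>2) + (\<Sum>k<n. 1 / (1 - x + real k)\<^sup>2)"
proof (induction n)
  case (Suc n)
  have "{-int (Suc n)..int (Suc n)} = insert (- int n - 1) (insert (int n + 1) {-int n..int n})"
    by auto
  then have "(\<Sum>t = -int (Suc n)..int (Suc n). 1 / (x + of_int t)\<^sup>2)
      = 1 / (1 - x + real n)\<^sup>2 + 1 / (x + real (Suc n))\<^sup>2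
        + (\<Sum>t = -int n..int n. 1 / (x + of_int t)\<^sup>2)"
    by (simp add: power2_commute algebra_simps)
  then show ?case
    using Suc by simp
qed simp

lemma sum_inverse_square_shifts_eq:
  fixes x :: real
  assumes "x \<notin> \<int>"
  shows "(\<Sum>t = -int n..int n. 1 / (x + of_int t)\<^sup>2)
       = pi\<^sup>2 / sin (pi * x) ^ 2 - Polygamma 1 (x + real (Suc n)) - Polygamma 1 (1 - x + real n)"
proof -
  have "x \<noteq> - real k" "1 - x \<noteq> - real k" for k
    using assms not_Ints_reflect(1)[OF assms] by (metis Ints_minus Ints_of_nat)+
  then have "Polygamma 1 (x + real (Suc n)) = Polygamma 1 x - (\<Sum>k<Suc n. 1 / (x + real k)\<^sup>2)"
    and "Polygamma 1 (1 - x + real n) = Polygamma 1 (1 - x) - (\<Sum>k<n. 1 / (1 - x + real k)\<^sup>2)"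
    using Polygamma_plus_of_nat[where z = x and m = "Suc n" and n = 1]
      Polygamma_plus_of_nat[where z = "1 - x" and m = n and n = 1]
    by (simp_all add: power2_eq_square)
  then show ?thesis
    using sum_inverse_square_shifts_split[of x n] Polygamma_1_reflection_real[OF assms] by simp
qed

lemma sum_inverse_square_shifts_defect:
  fixes x :: real
  assumes "x \<noteq> 0" "\<bar>x\<bar> \<le> 1/2" "1 \<le> n"
  defines "defect \<equiv> 1 - sin (pi * x) ^ 2 / pi\<^sup>2 * (\<Sum>t = -int n..int n. 1 / (x + of_int t)\<^sup>2)"
  shows "0 \<le> defect" "defect \<le> 2 / (pi\<^sup>2 * real n)"
proof -
  have x: "x \<notin> \<int>"
    using assms(1,2) by (auto elim!: Ints_cases)
  define a where "a = Polygamma 1 (x + real (Suc n))"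
  define b where "b = Polygamma 1 (1 - x + real n)"
  have s: "0 < sin (pi * x) ^ 2" "sin (pi * x) ^ 2 \<le> 1"
    using not_Ints_reflect(4)[OF x] abs_sin_le_one[of "pi * x"] by (auto simp: abs_square_le_1)
  have defect: "defect = sin (pi * x) ^ 2 / pi\<^sup>2 * (a + b)"
    using s by (simp add: defect_def sum_inverse_square_shifts_eq[OF x] a_def b_def field_simps)
  have "x + real (Suc n) \<notin> \<int>\<^sub>\<le>\<^sub>0" "1 - x + real n \<notin> \<int>\<^sub>\<le>\<^sub>0"
    using assms(2) by (auto elim!: nonpos_Ints_cases)
  then have "0 < a" "0 < b"
    unfolding a_def b_def by (auto intro: Polygamma_real_odd_pos)
  then show "0 \<le> defect"
    using s by (simp add: defect)
  have "a \<le> 1 / (x + real n + 1/2)" "b \<le> 1 / (real n + 1/2 - x)"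
  proof -
    have "1/2 < x + real (Suc n)" "1/2 < 1 - x + real n"
      using assms(2,3) by (simp_all add: abs_le_iff)
    then show "a \<le> 1 / (x + real n + 1/2)" "b \<le> 1 / (real n + 1/2 - x)"
      using Polygamma_1_le_real unfolding a_def b_def by (fastforce simp: algebra_simps)+
  qed
  moreover have "1 / (x + real n + 1/2) \<le> 1 / real n" "1 / (real n + 1/2 - x) \<le> 1 / real n"
    using assms(2,3) by (auto intro!: divide_left_mono simp: abs_le_iff)
  ultimately have "a + b \<le> 2 / real n"
    by simp
  then have "sin (pi * x) ^ 2 * (a + b) \<le> 1 * (2 / real n)"
    using s \<open>0 < a\<close> \<open>0 < b\<close> by (intro mult_mono) auto
  then show "defect \<le> 2 / (pi\<^sup>2 * real n)"
    by (simp add: defect divide_right_mono field_simps)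
qed

lemma sin_squared_diff:
  fixes a b :: real
  shows "sin a ^ 2 - sin b ^ 2 = sin (a + b) * sin (a - b)"
proof -
  have "sin (a + b) * sin (a - b) = (sin a * cos b)\<^sup>2 - (cos a * sin b)\<^sup>2"
    by (simp add: sin_add sin_diff power2_eq_square algebra_simps)
  also have "\<dots> = sin a ^ 2 * (1 - sin b ^ 2) - (1 - sin a ^ 2) * sin b ^ 2"
    by (simp add: power_mult_distrib cos_squared_eq)
  finally show ?thesis
    by (simp add: algebra_simps)
qed

lemma abs_sin_squared_add_diff_le:
  fixes u d :: real
  shows "\<bar>sin (u + d) ^ 2 - sin u ^ 2\<bar> \<le> (2 * \<bar>u\<bar> + \<bar>d\<bar>) * \<bar>d\<bar>"
proof -
  have "\<bar>sin (u + d) ^ 2 - sin u ^ 2\<bar> = \<bar>sin (2 * u + d)\<bar> * \<bar>sin d\<bar>"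
    by (simp add: sin_squared_diff abs_mult algebra_simps)
  also have "\<dots> \<le> \<bar>2 * u + d\<bar> * \<bar>d\<bar>"
    by (intro mult_mono abs_sin_x_le_abs_x) auto
  also have "\<dots> \<le> (2 * \<bar>u\<bar> + \<bar>d\<bar>) * \<bar>d\<bar>"
    by (intro mult_right_mono) auto
  finally show ?thesis .
qed

lemma sin_squared_add_int_pi:
  fixes z :: real and t :: int
  shows "sin (z + of_int t * pi) ^ 2 = sin z ^ 2"
proof -
  have "sin (of_int t * pi) = 0"
    using sin_zero_iff_int2 by blast
  then have "cos (of_int t * pi) ^ 2 = 1"
    using sin_cos_squared_add[of "of_int t * pi"] by simp
  moreover have "sin (z + of_int t * pi) = sin z * cos (of_int t * pi)"
    using \<open>sin (of_int t * pi) = 0\<close> by (simp add: sin_add)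
  ultimately show ?thesis
    by (simp add: power_mult_distrib)
qed

lemma cos_ge_one_minus_sq_half:
  fixes z :: real
  shows "1 - z\<^sup>2 / 2 \<le> cos z"
proof -
  have "1 - z\<^sup>2 / 2 \<le> cos z" if "0 \<le> z" for z :: real
  proof -
    have "cos 0 - 1 + 0\<^sup>2 / 2 \<le> cos z - 1 + z\<^sup>2 / 2"
    proof (rule DERIV_nonneg_imp_nondecreasing[OF that])
      fix x :: real
      assume "0 \<le> x"
      then show "\<exists>y. ((\<lambda>x. cos x - 1 + x\<^sup>2 / 2) has_real_derivative y) (at x) \<and> 0 \<le> y"
        by (intro exI[of _ "x - sin x"]) (auto intro!: derivative_eq_intros simp: sin_x_le_x)
    qed
    then show ?thesis
      by simp
  qed
  from this[of z] this[of "- z"] show ?thesis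
    by (cases "0 \<le> z") auto
qed

lemma sin_ge_cubic:
  fixes z :: real
  assumes "0 \<le> z"
  shows "z - z ^ 3 / 6 \<le> sin z"
proof -
  have "sin 0 - 0 + 0 ^ 3 / 6 \<le> sin z - z + z ^ 3 / 6"
  proof (rule DERIV_nonneg_imp_nondecreasing[OF assms])
    fix x :: real
    show "\<exists>y. ((\<lambda>x. sin x - x + x ^ 3 / 6) has_real_derivative y) (at x) \<and> 0 \<le> y"
      using cos_ge_one_minus_sq_half[of x]
      by (intro exI[of _ "cos x - 1 + x\<^sup>2 / 2"])
        (auto intro!: derivative_eq_intros simp: power2_eq_square power3_eq_cube)
  qed
  then show ?thesis
    by simp
qed

lemma sin_squared_bounds_nonneg:
  fixes z :: real
  assumes "0 \<le> z" "z \<le> pi / 2"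
  shows "z\<^sup>2 / 3 \<le> sin z ^ 2" "z\<^sup>2 - sin z ^ 2 \<le> z ^ 4 / 3" "sin z ^ 2 \<le> z\<^sup>2"
proof -
  have "z \<le> 1.58"
    using assms pi_approx by simp
  then have z2: "z\<^sup>2 \<le> 2.5"
    using assms power_mono[of z "1.58" 2] by (simp add: power2_eq_square)
  have "0 \<le> z - z ^ 3 / 6"
    using z2 assms mult_left_mono[of "z\<^sup>2 / 6" 1 z] by (simp add: power2_eq_square power3_eq_cube)
  then have sq: "(z - z ^ 3 / 6)\<^sup>2 \<le> sin z ^ 2"
    using sin_ge_cubic[OF assms(1)] by (intro power_mono) auto
  have "(z - z ^ 3 / 6)\<^sup>2 = z\<^sup>2 * (1 - z\<^sup>2 / 6)\<^sup>2"
    by (simp add: power2_eq_square power3_eq_cube algebra_simps)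
  moreover have "1 / 3 \<le> (1 - z\<^sup>2 / 6)\<^sup>2"
    using z2 power_mono[of "29 / 50" "1 - z\<^sup>2 / 6" 2] by (simp add: power2_eq_square)
  ultimately have "z\<^sup>2 * (1 / 3) \<le> (z - z ^ 3 / 6)\<^sup>2"
    by (metis mult_left_mono zero_le_power2)
  with sq show "z\<^sup>2 / 3 \<le> sin z ^ 2"
    by simp
  have "z\<^sup>2 - z ^ 4 / 3 \<le> (z - z ^ 3 / 6)\<^sup>2"
    using assms by (simp add: power2_eq_square power3_eq_cube power4_eq_xxxx algebra_simps)
  with sq show "z\<^sup>2 - sin z ^ 2 \<le> z ^ 4 / 3"
    by simp
  show "sin z ^ 2 \<le> z\<^sup>2"
    using assms sin_x_le_x[of z] sin_ge_zero[of z] by (intro power_mono) auto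
qed

lemma sin_squared_bounds:
  fixes z :: real
  assumes "\<bar>z\<bar> \<le> pi / 2"
  shows "z\<^sup>2 / 3 \<le> sin z ^ 2" "z\<^sup>2 - sin z ^ 2 \<le> z ^ 4 / 3" "sin z ^ 2 \<le> z\<^sup>2"
  using sin_squared_bounds_nonneg[of "\<bar>z\<bar>"] assms by (cases "0 \<le> z"; simp)+

lemma scaled_sin_squared_bounds:
  fixes a N :: real
  assumes "0 < N" "\<bar>a\<bar> \<le> pi / 2 * N"
  shows "a\<^sup>2 / 3 \<le> N\<^sup>2 * sin (a / N) ^ 2" "N\<^sup>2 * sin (a / N) ^ 2 \<le> a\<^sup>2"
    "a\<^sup>2 - N\<^sup>2 * sin (a / N) ^ 2 \<le> a ^ 4 / (3 * N\<^sup>2)"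
proof -
  have "\<bar>a / N\<bar> \<le> pi / 2"
    using assms by (simp add: field_simps)
  note b = sin_squared_bounds[OF this]
  have a: "N\<^sup>2 * (a / N)\<^sup>2 = a\<^sup>2" "N\<^sup>2 * ((a / N) ^ 4 / 3) = a ^ 4 / (3 * N\<^sup>2)"
    using assms(1) by (simp_all add: field_simps power2_eq_square power4_eq_xxxx)
  show "a\<^sup>2 / 3 \<le> N\<^sup>2 * sin (a / N) ^ 2"
    using mult_left_mono[OF b(1), of "N\<^sup>2"] a(1) by simp
  show "N\<^sup>2 * sin (a / N) ^ 2 \<le> a\<^sup>2"
    using mult_left_mono[OF b(3), of "N\<^sup>2"] a(1) by simp
  show "a\<^sup>2 - N\<^sup>2 * sin (a / N) ^ 2 \<le> a ^ 4 / (3 * N\<^sup>2)"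
    using mult_left_mono[OF b(2), of "N\<^sup>2"] a by (simp add: right_diff_distrib)
qed

lemma weighted_error_le:
  fixes \<beta> r c e1 e2 :: real
  assumes "0 \<le> \<beta>" "\<beta> \<le> r" "0 \<le> c" "\<bar>e1\<bar> \<le> c * (r - \<beta>)" "\<bar>e2\<bar> \<le> c * \<beta>"
  shows "\<bar>\<beta> * e1 + (r - \<beta>) * e2\<bar> \<le> c * r\<^sup>2 / 2"
proof -
  have "\<bar>\<beta> * e1 + (r - \<beta>) * e2\<bar> \<le> \<beta> * \<bar>e1\<bar> + (r - \<beta>) * \<bar>e2\<bar>"
    using assms(1,2) abs_triangle_ineq[of "\<beta> * e1" "(r - \<beta>) * e2"] by (simp add: abs_mult)
  also have "\<dots> \<le> \<beta> * (c * (r - \<beta>)) + (r - \<beta>) * (c * \<beta>)"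
    using assms by (intro add_mono mult_left_mono) auto
  also have "\<dots> = c * r\<^sup>2 / 2 - c * (r - 2 * \<beta>)\<^sup>2 / 2"
    by (simp add: power2_eq_square field_simps)
  also have "\<dots> \<le> c * r\<^sup>2 / 2"
    using assms(3) by simp
  finally show ?thesis .
qed

lemma ratio_perturbation_le:
  fixes a D N r s e :: real
  assumes "0 < a" "a / 3 \<le> D" "D \<le> a" "a - D \<le> a\<^sup>2 / (3 * N\<^sup>2)"
    and "0 \<le> s" "s \<le> 1" "0 < r" "r \<le> N" "\<bar>e\<bar> \<le> 3 * a / (2 * N)"
  shows "\<bar>(r * s + e) / D - r * s / a\<bar> \<le> 11 / (2 * N)"
proof -
  have D: "0 < D"
    using assms(1,2) by linarith
  have N: "0 < N"
    using assms(7,8) by linarith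
  have "\<bar>e / D\<bar> = \<bar>e\<bar> / D"
    using D by simp
  also have "\<dots> \<le> (3 * a / (2 * N)) / (a / 3)"
    using assms(1,2,9) N by (intro frac_le) auto
  also have "\<dots> = 9 / (2 * N)"
    using assms(1) by (simp add: field_simps)
  finally have e: "\<bar>e / D\<bar> \<le> 9 / (2 * N)" .
  have "\<bar>r * s * (a - D) / (D * a)\<bar> = r * s * (a - D) / (D * a)"
    using assms D by simp
  also have "\<dots> \<le> r * 1 * (a\<^sup>2 / (3 * N\<^sup>2)) / (a / 3 * a)"
    using assms D by (intro frac_le mult_mono mult_right_mono) auto
  also have "\<dots> = r / N\<^sup>2"
    using assms(1) by (simp add: field_simps power2_eq_square)
  also have "\<dots> \<le> 1 / N"
    using assms(8) N by (simp add: field_simps power2_eq_square)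
  finally have s: "\<bar>r * s * (a - D) / (D * a)\<bar> \<le> 1 / N" .
  have "(r * s + e) / D - r * s / a = e / D + r * s * (a - D) / (D * a)"
    using assms(1) D by (simp add: field_simps)
  then show ?thesis
    using e s abs_triangle_ineq[of "e / D" "r * s * (a - D) / (D * a)"] by (simp add: field_simps)
qed

lemma abs_le_abs_add_int_mult:
  fixes x r :: real and t :: int
  assumes "\<bar>x\<bar> \<le> r / 2"
  shows "\<bar>x\<bar> \<le> \<bar>x + r * of_int t\<bar>"
proof (cases "t = 0")
  case False
  then have "1 \<le> \<bar>of_int t :: real\<bar>"
    by linarith
  then have "r \<le> \<bar>r * of_int t\<bar>"
    using assms mult_left_mono[of 1 "\<bar>of_int t\<bar>" r] by (simp add: abs_mult)
  then show ?thesis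
    using assms abs_triangle_ineq2[of "r * of_int t" "- x"] by simp
qed simp

lemma mixed_sin_squared_error_le:
  fixes u d1 d2 p \<beta> r N :: real
  assumes "\<bar>u\<bar> \<le> p" "0 \<le> \<beta>" "\<beta> \<le> r" "r \<le> N" "0 < N"
    and "\<bar>d1\<bar> = p * ((r - \<beta>) / N)" "\<bar>d2\<bar> = p * (\<beta> / N)"
  shows "\<bar>\<beta> * (sin (u + d1) ^ 2 - sin u ^ 2) + (r - \<beta>) * (sin (u + d2) ^ 2 - sin u ^ 2)\<bar>
      \<le> 3 * p\<^sup>2 * r\<^sup>2 / (2 * N)"
proof -
  have p: "0 \<le> p"
    using assms(1) by linarith
  have "(r - \<beta>) / N \<le> 1" "\<beta> / N \<le> 1"
    using assms(2-5) by simp_all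
  then have "\<bar>d1\<bar> \<le> p * 1" "\<bar>d2\<bar> \<le> p * 1"
    unfolding assms(6,7) using p by (simp_all only: mult_left_mono)
  then have "(2 * \<bar>u\<bar> + \<bar>d1\<bar>) * \<bar>d1\<bar> \<le> 3 * p * \<bar>d1\<bar>" "(2 * \<bar>u\<bar> + \<bar>d2\<bar>) * \<bar>d2\<bar> \<le> 3 * p * \<bar>d2\<bar>"
    using assms(1) by (intro mult_right_mono; simp)+
  moreover have "3 * p * \<bar>d1\<bar> = 3 * p\<^sup>2 / N * (r - \<beta>)" "3 * p * \<bar>d2\<bar> = 3 * p\<^sup>2 / N * \<beta>"
    unfolding assms(6,7) by (simp_all add: power2_eq_square)
  ultimately have "\<bar>sin (u + d1) ^ 2 - sin u ^ 2\<bar> \<le> 3 * p\<^sup>2 / N * (r - \<beta>)"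
    "\<bar>sin (u + d2) ^ 2 - sin u ^ 2\<bar> \<le> 3 * p\<^sup>2 / N * \<beta>"
    using abs_sin_squared_add_diff_le[of u d1] abs_sin_squared_add_diff_le[of u d2] by linarith+
  from weighted_error_le[OF assms(2,3) _ this] show ?thesis
    using assms(5) by (simp add: mult.commute)
qed

lemma sin_squared_mixture_numerator:
  fixes N r \<beta> L \<alpha>0 :: real and t :: int
  assumes "r \<noteq> 0" "N \<noteq> 0" "r * L + \<beta> = N"
  defines "\<theta> \<equiv> pi * (\<alpha>0 + r * of_int t) / N" and "u \<equiv> pi * \<alpha>0 / r"
    and "\<delta> \<equiv> pi * \<beta> * (\<alpha>0 + r * of_int t) / (r * N)"
  shows "\<beta> * sin ((L + 1) * \<theta>) ^ 2 + (r - \<beta>) * sin (L * \<theta>) ^ 2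
      = r * sin u ^ 2 + (\<beta> * (sin (u + (\<theta> - \<delta>)) ^ 2 - sin u ^ 2)
                         + (r - \<beta>) * (sin (u + - \<delta>) ^ 2 - sin u ^ 2))"
proof -
  have "L * \<theta> = u + - \<delta> + of_int t * pi" "(L + 1) * \<theta> = u + (\<theta> - \<delta>) + of_int t * pi"
    using assms(1,2) by (simp_all add: \<theta>_def u_def \<delta>_def field_simps)
      (simp_all add: assms(3)[symmetric] algebra_simps)
  then show ?thesis
    by (simp only: sin_squared_add_int_pi) (simp add: algebra_simps)
qed

lemma sin_squared_mixture_approx:
  fixes N r \<beta> L \<alpha>0 :: real and t :: int
  assumes "0 < r" "r \<le> N" "r * L + \<beta> = N" "0 \<le> \<beta>" "\<beta> \<le> r"
    and "\<alpha>0 \<noteq> 0" "\<bar>\<alpha>0\<bar> \<le> r / 2" "\<bar>\<alpha>0 + r * of_int t\<bar> \<le> N / 2"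
  defines "\<theta> \<equiv> pi * (\<alpha>0 + r * of_int t) / N"
  shows "\<bar>(\<beta> * sin ((L + 1) * \<theta>) ^ 2 + (r - \<beta>) * sin (L * \<theta>) ^ 2) / (N\<^sup>2 * sin \<theta> ^ 2)
          - sin (pi * \<alpha>0 / r) ^ 2 / (pi\<^sup>2 * r * (\<alpha>0 / r + of_int t)\<^sup>2)\<bar> \<le> 11 / (2 * N)"
proof -
  define \<alpha> where "\<alpha> = \<alpha>0 + r * of_int t"
  define u where "u = pi * \<alpha>0 / r"
  define \<delta> where "\<delta> = pi * \<beta> * \<alpha> / (r * N)"
  define p where "p = pi * \<bar>\<alpha>\<bar> / r"
  have N: "0 < N"
    using assms(1,2) by linarith
  have \<alpha>: "\<bar>\<alpha>0\<bar> \<le> \<bar>\<alpha>\<bar>" "\<alpha> \<noteq> 0"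
    using abs_le_abs_add_int_mult[OF assms(7), of t] assms(6) unfolding \<alpha>_def by auto
  have numerator: "\<beta> * sin ((L + 1) * \<theta>) ^ 2 + (r - \<beta>) * sin (L * \<theta>) ^ 2
      = r * sin u ^ 2 + (\<beta> * (sin (u + (\<theta> - \<delta>)) ^ 2 - sin u ^ 2)
                         + (r - \<beta>) * (sin (u + - \<delta>) ^ 2 - sin u ^ 2))"
    unfolding \<theta>_def u_def \<delta>_def \<alpha>_def
    by (rule sin_squared_mixture_numerator) (use assms(1,3) N in auto)
  have "\<theta> - \<delta> = pi * \<alpha> / r * ((r - \<beta>) / N)" "- \<delta> = - (pi * \<alpha> / r * (\<beta> / N))"
    using assms(1) N by (simp_all add: \<theta>_def \<delta>_def \<alpha>_def field_simps)
  then have "\<bar>\<theta> - \<delta>\<bar> = p * ((r - \<beta>) / N)" "\<bar>- \<delta>\<bar> = p * (\<beta> / N)"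
    using assms(1,4,5) N by (simp_all add: p_def abs_mult)
  moreover have "\<bar>u\<bar> \<le> p"
    using \<alpha>(1) assms(1) by (simp add: u_def p_def abs_mult divide_right_mono)
  ultimately have "\<bar>\<beta> * (sin (u + (\<theta> - \<delta>)) ^ 2 - sin u ^ 2) + (r - \<beta>) * (sin (u + - \<delta>) ^ 2 - sin u ^ 2)\<bar>
      \<le> 3 * p\<^sup>2 * r\<^sup>2 / (2 * N)"
    using assms(2,4,5) N by (intro mixed_sin_squared_error_le) auto
  also have "\<dots> = 3 * (pi * \<alpha>)\<^sup>2 / (2 * N)"
    using assms(1) by (simp add: p_def power2_eq_square field_simps)
  finally have error: "\<bar>\<beta> * (sin (u + (\<theta> - \<delta>)) ^ 2 - sin u ^ 2) + (r - \<beta>) * (sin (u + - \<delta>) ^ 2 - sin u ^ 2)\<bar>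
      \<le> 3 * (pi * \<alpha>)\<^sup>2 / (2 * N)" .
  have "\<bar>pi * \<alpha>\<bar> \<le> pi / 2 * N"
    using assms(8) by (simp add: \<alpha>_def abs_mult)
  moreover have "\<theta> = pi * \<alpha> / N"
    by (simp add: \<theta>_def \<alpha>_def)
  ultimately have denominator: "(pi * \<alpha>)\<^sup>2 / 3 \<le> N\<^sup>2 * sin \<theta> ^ 2" "N\<^sup>2 * sin \<theta> ^ 2 \<le> (pi * \<alpha>)\<^sup>2"
    "(pi * \<alpha>)\<^sup>2 - N\<^sup>2 * sin \<theta> ^ 2 \<le> (pi * \<alpha>) ^ 4 / (3 * N\<^sup>2)"
    using scaled_sin_squared_bounds[OF N] by auto
  have "(pi * \<alpha>)\<^sup>2 = r * (pi\<^sup>2 * r * (\<alpha>0 / r + of_int t)\<^sup>2)"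
    using assms(1) by (simp add: \<alpha>_def power2_eq_square field_simps)
  then have target: "sin (pi * \<alpha>0 / r) ^ 2 / (pi\<^sup>2 * r * (\<alpha>0 / r + of_int t)\<^sup>2)
      = r * sin u ^ 2 / (pi * \<alpha>)\<^sup>2"
    using assms(1) by (simp add: u_def)
  show ?thesis
    unfolding numerator target
  proof (rule ratio_perturbation_le[OF _ denominator(1,2) _ _ _ assms(1,2) error])
    show "(pi * \<alpha>)\<^sup>2 - N\<^sup>2 * sin \<theta> ^ 2 \<le> ((pi * \<alpha>)\<^sup>2)\<^sup>2 / (3 * N\<^sup>2)"
      using denominator(3) by (simp add: power4_eq_xxxx power2_eq_square)
    show "sin u ^ 2 \<le> 1"
      using abs_sin_le_one[of u] by (simp add: abs_square_le_1)
  qed (use \<alpha>(2) in auto)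
qed

lemma qpe_P_eq_sin_squares:
  fixes r m l :: nat and \<alpha> :: real
  defines "N \<equiv> (2::real) ^ (m + l)" and "\<beta> \<equiv> real (qpe_beta r m l)" and "L \<equiv> real (qpe_L r m l)"
    and "\<theta> \<equiv> pi * \<alpha> / 2 ^ (m + l)"
  shows "qpe_P r m l \<alpha> = (\<beta> * sin ((L + 1) * \<theta>) ^ 2 + (real r - \<beta>) * sin (L * \<theta>) ^ 2) / (N\<^sup>2 * sin \<theta> ^ 2)"
proof -
  have angles: "2 * pi * \<alpha> * (L + 1) / N = 2 * ((L + 1) * \<theta>)" "2 * pi * \<alpha> * L / N = 2 * (L * \<theta>)"
    "2 * pi * \<alpha> / N = 2 * \<theta>"
    by (simp_all add: \<theta>_def N_def)
  have "N \<noteq> 0"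
    by (simp add: N_def)
  then show ?thesis
    unfolding qpe_P_def Let_def N_def[symmetric] \<beta>_def[symmetric] L_def[symmetric] angles cos_double_sin
    by (cases "sin \<theta> = 0") (simp_all add: field_simps)
qed

lemma qpe_L_beta_decomp:
  "real r * real (qpe_L r m l) + real (qpe_beta r m l) = (2::real) ^ (m + l)"
proof -
  have "r * qpe_L r m l + qpe_beta r m l = 2 ^ (m + l)"
    by (simp add: qpe_L_def qpe_beta_def)
  then show ?thesis
    by (metis of_nat_add of_nat_mult of_nat_numeral of_nat_power)
qed

lemma qpe_P_approx:
  fixes \<alpha>0 :: real and t :: int
  assumes "0 < r" "real r \<le> 2 ^ (m + l)" "\<alpha>0 \<noteq> 0" "\<bar>\<alpha>0\<bar> \<le> r / 2"
    and "\<bar>\<alpha>0 + r * of_int t\<bar> \<le> 2 ^ (m + l) / 2"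
  shows "\<bar>qpe_P r m l (\<alpha>0 + r * of_int t)
          - sin (pi * \<alpha>0 / r) ^ 2 / (pi\<^sup>2 * r * (\<alpha>0 / r + of_int t)\<^sup>2)\<bar> \<le> 11 / (2 * 2 ^ (m + l))"
proof -
  have "real (qpe_beta r m l) \<le> real r"
    using assms(1) by (simp add: qpe_beta_def)
  then show ?thesis
    unfolding qpe_P_eq_sin_squares
    using assms qpe_L_beta_decomp
    by (intro sin_squared_mixture_approx) (auto simp: mult.commute)
qed

lemma sum_qpe_P_approx:
  fixes \<alpha>0 :: real and B :: int
  assumes "0 < r" "\<alpha>0 \<noteq> 0" "\<bar>\<alpha>0\<bar> \<le> r / 2" "0 \<le> B"
    and "real r * (2 * B + 1) \<le> 2 ^ (m + l)"
  shows "\<bar>(\<Sum>t = -B..B. qpe_P r m l (\<alpha>0 + r * of_int t))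
          - sin (pi * \<alpha>0 / r) ^ 2 / (pi\<^sup>2 * r) * (\<Sum>t = -B..B. 1 / (\<alpha>0 / r + of_int t)\<^sup>2)\<bar>
        \<le> (2 * B + 1) * (11 / (2 * 2 ^ (m + l)))"
proof -
  have "real r * 1 \<le> real r * (2 * B + 1)"
    using assms(4) by (intro mult_left_mono) auto
  then have r_le: "real r \<le> 2 ^ (m + l)"
    using assms(5) by linarith
  have per_term: "\<bar>qpe_P r m l (\<alpha>0 + r * of_int t)
          - sin (pi * \<alpha>0 / r) ^ 2 / (pi\<^sup>2 * r) * (1 / (\<alpha>0 / r + of_int t)\<^sup>2)\<bar> \<le> 11 / (2 * 2 ^ (m + l))"
    if "t \<in> {-B..B}" for t
  proof -
    have "\<bar>of_int t\<bar> \<le> real_of_int B"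
      using that by auto
    then have "\<bar>real r * of_int t\<bar> \<le> real r * of_int B"
      by (simp add: abs_mult mult_left_mono)
    then have "\<bar>\<alpha>0 + r * of_int t\<bar> \<le> 2 ^ (m + l) / 2"
      using assms(3,5) abs_triangle_ineq[of \<alpha>0 "r * of_int t"] by (simp add: algebra_simps)
    then show ?thesis
      using qpe_P_approx[OF assms(1) r_le assms(2,3)] by simp
  qed
  have "\<bar>\<Sum>t = -B..B. qpe_P r m l (\<alpha>0 + r * of_int t)
          - sin (pi * \<alpha>0 / r) ^ 2 / (pi\<^sup>2 * r) * (1 / (\<alpha>0 / r + of_int t)\<^sup>2)\<bar>
        \<le> real (card {-B..B}) * (11 / (2 * 2 ^ (m + l)))"
    using per_term by (intro order_trans[OF sum_abs] sum_bounded_above) auto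
  then show ?thesis
    using assms(4) by (simp add: sum_subtractf sum_distrib_left)
qed

lemma eleven_div_le_pi_sq_div:
  fixes N q :: real
  assumes "0 < N" "0 \<le> q"
  shows "11 / (2 * N) \<le> pi\<^sup>2 / N * (3 / 4 + q)"
proof -
  have "9 \<le> pi\<^sup>2" "0 \<le> pi\<^sup>2 * q"
    using pi_gt3 mult_mono[of 3 pi 3 pi] assms(2) by (simp_all add: power2_eq_square)
  then have "11 / 2 \<le> pi\<^sup>2 * (3 / 4 + q)"
    by (simp only: distrib_left)
  then show ?thesis
    using assms(1) by (simp add: field_simps)
qed

theorem theorem1:
  fixes r m l :: nat and \<alpha>0 :: real and B :: int
  assumes "r \<ge> 2" and "m > 0" and "l > 0" and "r < 2 ^ m"
    and "\<alpha>0 \<noteq> 0" and "- real r / 2 < \<alpha>0" and "\<alpha>0 \<le> real r / 2"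
    and "1 \<le> B" and "real_of_int B < ((2::real) ^ (m + l) / real r - 1) / 2"
  shows "\<exists>\<epsilon>R \<epsilon>A.
     (\<Sum>t = -B..B. qpe_P r m l (\<alpha>0 + real r * real_of_int t))
        = 1 / real r * (1 - \<epsilon>R) + \<epsilon>A
     \<and> 0 \<le> \<epsilon>R
     \<and> \<epsilon>R \<le> 1 / pi\<^sup>2 * (2 / real_of_int B + 1 / (real_of_int B)\<^sup>2 + 1 / (3 * (real_of_int B) ^ 3))
     \<and> \<bar>\<epsilon>A\<bar> \<le> (2 * real_of_int B + 1) *
          (pi\<^sup>2 / 2 ^ (m + l) * (3 / 4 + real r / 2 ^ (m + l) * (1 / 12)))"
proof -
  define n where "n = nat B"
  define x where "x = \<alpha>0 / real r"
  define \<epsilon>R where "\<epsilon>R = 1 - sin (pi * x) ^ 2 / pi\<^sup>2 * (\<Sum>t = -int n..int n. 1 / (x + of_int t)\<^sup>2)"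
  define \<epsilon>A where "\<epsilon>A = (\<Sum>t = -B..B. qpe_P r m l (\<alpha>0 + real r * of_int t)) - 1 / real r * (1 - \<epsilon>R)"
  have r: "0 < r" and B: "B = int n" "1 \<le> n"
    using assms(1,8) by (auto simp: n_def)
  have x: "x \<noteq> 0" "\<bar>x\<bar> \<le> 1/2" and \<alpha>0: "\<bar>\<alpha>0\<bar> \<le> r / 2"
    using assms(5-7) r by (auto simp: x_def field_simps)
  have "0 \<le> \<epsilon>R" "\<epsilon>R \<le> 2 / (pi\<^sup>2 * n)"
    using sum_inverse_square_shifts_defect[OF x B(2)] by (simp_all add: \<epsilon>R_def)
  moreover have "2 / (pi\<^sup>2 * n) \<le> 1 / pi\<^sup>2 * (2 / real_of_int B + 1 / (real_of_int B)\<^sup>2 + 1 / (3 * (real_of_int B) ^ 3))"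
    using B by (simp add: field_simps)
  ultimately have \<epsilon>R_bounds: "0 \<le> \<epsilon>R"
    "\<epsilon>R \<le> 1 / pi\<^sup>2 * (2 / real_of_int B + 1 / (real_of_int B)\<^sup>2 + 1 / (3 * (real_of_int B) ^ 3))"
    by linarith+
  have "\<epsilon>A = (\<Sum>t = -B..B. qpe_P r m l (\<alpha>0 + real r * of_int t))
      - sin (pi * \<alpha>0 / r) ^ 2 / (pi\<^sup>2 * r) * (\<Sum>t = -B..B. 1 / (\<alpha>0 / r + of_int t)\<^sup>2)"
    by (simp add: \<epsilon>A_def \<epsilon>R_def x_def B(1))
  moreover have "real r * (2 * real_of_int B + 1) \<le> 2 ^ (m + l)"
    using assms(9) r by (simp add: field_simps)
  ultimately have "\<bar>\<epsilon>A\<bar> \<le> (2 * real_of_int B + 1) * (11 / (2 * 2 ^ (m + l)))"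
    using sum_qpe_P_approx[OF r assms(5) \<alpha>0, of B] assms(8) by simp
  also have "\<dots> \<le> (2 * real_of_int B + 1) * (pi\<^sup>2 / 2 ^ (m + l) * (3 / 4 + real r / 2 ^ (m + l) * (1 / 12)))"
    using assms(8) by (intro mult_left_mono eleven_div_le_pi_sq_div) auto
  finally show ?thesis
    using \<epsilon>R_bounds by (force simp: \<epsilon>A_def)
qed

end
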